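(* Let $S=\langle P,\varphi\rangle$ be a SUT model, $t$ a strength, $N\ge1$ an integer and $lb$ an integer with $0\le lb<CAN(t,S)$ and $lb+1\le N$. Let $m=N-(lb+1)$ be the number of variables $u_i$, and consider the Weighted Partial MaxSAT instance $\Phi$ defined in the context. If $N\ge CAN(t,S)$, the optimal cost of $\Phi$ is $CAN(t,S)-(lb+1)+(|\mathcal T_a|-T(N;t,S))\cdot(m+1)$; otherwise it is $N-(lb+1)+(|\mathcal T_a|-T(N;t,S))\cdot(m+1)$.
   Context: A SUT model is $S=\langle P,\varphi\rangle$, where $P$ is a finite set of parameters, each $p\in P$ having a finite nonempty domain $d(p)$, and $\varphi$ is a propositional formula whose atoms have the form $(p=v)$ with $p\in P$, $v\in d(p)$. A test case is a full assignment $A$ giving each $p$ a value in $d(p)$ such that $\varphi$ is true when each atom $(p=v)$ is read as true iff $A(p)=v$; it is assumed that at least one test case exists. Fix a strength $t$ with $1\le t\le|P|$. A $t$-tuple is an assignment of values to exactly $t$ distinct parameters, viewed as a set of pairs $(p,v)$; a test case covers $\tau$ if it assigns $v$ to $p$ for every $(p,v)\in\tau$. A $t$-tuple is allowed if some test case covers it; $\mathcal T_a$ is the set of allowed $t$-tuples. A covering array $CA(N;t,S)$ is a list of $N$ test cases (repetitions allowed) covering every allowed $t$-tuple; $CAN(t,S)$ is the minimum such $N$. $T(N;t,S)$ is the maximum number of $t$-tuples covered by a list of $N$ test cases. $[N]=\{1,\dots,N\}$. A Weighted Partial MaxSAT instance consists of hard constraints and soft clauses $(c,w)$ with positive integer weights;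 its optimal cost is the minimum, over truth assignments satisfying all hard constraints, of the total weight of falsified soft clauses ($\infty$ if the hard constraints are unsatisfiable). Variables: $x_{i,p,v}$ ($i\in[N]$, $p\in P$, $v\in d(p)$), $c^i_\tau$ and $c_\tau$ ($i\in[N]$, $\tau\in\mathcal T_a$), $u_i$ ($i\in\{lb+2,\dots,N\}$). Hard constraints of $\Phi$: (X) for every $i\in[N]$, $p\in P$: exactly one of $\{x_{i,p,v}:v\in d(p)\}$ is true; (SUTX) for every $i\in[N]$: the formula obtained from $\varphi$ by replacing each atom $(p=v)$ with $x_{i,p,v}$; (CX) for every $i\in[N]$, $\tau\in\mathcal T_a$, $(p,v)\in\tau$: $c^i_\tau\rightarrow x_{i,p,v}$; (RC) for every $\tau\in\mathcal T_a$: $c_\tau\leftrightarrow\bigvee_{i\in[N]}c^i_\tau$; (BSU) for every $i\in\{lb+2,\dots,N-1\}$: $u_{i+1}\rightarrow u_i$; (CU) for every $i\in\{lb+2,\dots,N\}$, $\tau\in\mathcal T_a$: $c^i_\tau\rightarrow u_i$. Soft clauses: $(\neg u_i,1)$ for every $i\in\{lb+2,\dots,N\}$, and $(c_\tau,m+1)$ for every $\tau\in\mathcal T_a$. *)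

theory Defs
  imports Main "HOL-Library.Extended_Nat"
begin

datatype 'a pform = PAtom 'a | PTrue | PFalse | PNot "'a pform"
  | PAnd "'a pform" "'a pform" | POr "'a pform" "'a pform"
  | PImp "'a pform" "'a pform" | PIff "'a pform" "'a pform"

fun peval :: "('a \<Rightarrow> bool) \<Rightarrow> 'a pform \<Rightarrow> bool" where
  "peval \<alpha> (PAtom a) = \<alpha> a"
| "peval \<alpha> PTrue = True"
| "peval \<alpha> PFalse = False"
| "peval \<alpha> (PNot f) = (\<not> peval \<alpha> f)"
| "peval \<alpha> (PAnd f g) = (peval \<alpha> f \<and> peval \<alpha> g)"
| "peval \<alpha> (POr f g) = (peval \<alpha> f \<or> peval \<alpha> g)"
| "peval \<alpha> (PImp f g) = (peval \<alpha> f \<longrightarrow> peval \<alpha> g)"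
| "peval \<alpha> (PIff f g) = (peval \<alpha> f \<longleftrightarrow> peval \<alpha> g)"

text \<open>A SUT model: parameters P, domains d, formula \<phi> whose atoms (p,v) stand for (p=v).\<close>
definition sut_model :: "'p set \<Rightarrow> ('p \<Rightarrow> 'v set) \<Rightarrow> ('p \<times> 'v) pform \<Rightarrow> bool" where
  "sut_model P d \<phi> \<longleftrightarrow> finite P \<and> (\<forall>p\<in>P. finite (d p) \<and> d p \<noteq> {})
     \<and> set_pform \<phi> \<subseteq> Sigma P d"

definition test_case :: "'p set \<Rightarrow> ('p \<Rightarrow> 'v set) \<Rightarrow> ('p \<times> 'v) pform \<Rightarrow> ('p \<Rightarrow> 'v) \<Rightarrow> bool" where
  "test_case P d \<phi> A \<longleftrightarrow> (\<forall>p\<in>P. A p \<in> d p) \<and> peval (\<lambda>(p, v). A p = v) \<phi>"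

definition ttuple :: "'p set \<Rightarrow> ('p \<Rightarrow> 'v set) \<Rightarrow> nat \<Rightarrow> ('p \<times> 'v) set \<Rightarrow> bool" where
  "ttuple P d t \<tau> \<longleftrightarrow> finite \<tau> \<and> \<tau> \<subseteq> Sigma P d \<and> card \<tau> = t \<and> card (fst ` \<tau>) = t"

definition covers :: "('p \<Rightarrow> 'v) \<Rightarrow> ('p \<times> 'v) set \<Rightarrow> bool" where
  "covers A \<tau> \<longleftrightarrow> (\<forall>(p, v)\<in>\<tau>. A p = v)"

definition allowed :: "'p set \<Rightarrow> ('p \<Rightarrow> 'v set) \<Rightarrow> ('p \<times> 'v) pform \<Rightarrow> nat \<Rightarrow> ('p \<times> 'v) set set" where
  "allowed P d \<phi> t = {\<tau>. ttuple P d t \<tau> \<and> (\<exists>A. test_case P d \<phi> A \<and> covers A \<tau>)}"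

definition is_CA :: "'p set \<Rightarrow> ('p \<Rightarrow> 'v set) \<Rightarrow> ('p \<times> 'v) pform \<Rightarrow> nat \<Rightarrow> ('p \<Rightarrow> 'v) list \<Rightarrow> bool" where
  "is_CA P d \<phi> t L \<longleftrightarrow> (\<forall>A\<in>set L. test_case P d \<phi> A)
     \<and> (\<forall>\<tau>\<in>allowed P d \<phi> t. \<exists>A\<in>set L. covers A \<tau>)"

definition CAN :: "'p set \<Rightarrow> ('p \<Rightarrow> 'v set) \<Rightarrow> ('p \<times> 'v) pform \<Rightarrow> nat \<Rightarrow> nat" where
  "CAN P d \<phi> t = (LEAST N. \<exists>L. length L = N \<and> is_CA P d \<phi> t L)"

definition Tcov :: "'p set \<Rightarrow> ('p \<Rightarrow> 'v set) \<Rightarrow> ('p \<times> 'v) pform \<Rightarrow> nat \<Rightarrow> nat \<Rightarrow> nat" where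
  "Tcov P d \<phi> t N = Max {card {\<tau>. ttuple P d t \<tau> \<and> (\<exists>A\<in>set L. covers A \<tau>)} | L.
      length L = N \<and> (\<forall>A\<in>set L. test_case P d \<phi> A)}"

text \<open>An instance is given by a set of hard constraints and a set of weighted soft clauses;
  constraints/clauses are represented by their truth functions on assignments of the variables.
  The optimal cost is the infimum (in enat, so \<infinity> if no assignment satisfies the hard
  constraints) of the total weight of falsified soft clauses.\<close>
definition wpms_opt :: "(('a \<Rightarrow> bool) \<Rightarrow> bool) set \<Rightarrow> ((('a \<Rightarrow> bool) \<Rightarrow> bool) \<times> nat) set \<Rightarrow> enat" where
  "wpms_opt H S = (INF \<alpha> \<in> {\<alpha>. \<forall>h\<in>H. h \<alpha>}. enat (\<Sum>(c, w)\<in>S. if c \<alpha> then 0 else w))"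

text \<open>Variables x_{i,p,v}, c^i_\<tau>, c_\<tau>, u_i.\<close>
datatype ('p, 'v) mvar = X nat 'p 'v | Ci nat "('p \<times> 'v) set" | Ct "('p \<times> 'v) set" | U nat

definition hard_cons :: "'p set \<Rightarrow> ('p \<Rightarrow> 'v set) \<Rightarrow> ('p \<times> 'v) pform \<Rightarrow> nat \<Rightarrow> nat \<Rightarrow> nat
    \<Rightarrow> ((('p, 'v) mvar \<Rightarrow> bool) \<Rightarrow> bool) set" where
  "hard_cons P d \<phi> t N lb =
     \<comment> \<open>(X)\<close>
     {(\<lambda>\<alpha>. card {v \<in> d p. \<alpha> (X i p v)} = 1) | i p. i \<in> {1..N} \<and> p \<in> P}
   \<union> \<comment> \<open>(SUTX)\<close>
     {(\<lambda>\<alpha>. peval \<alpha> (map_pform (\<lambda>(p, v). X i p v) \<phi>)) | i. i \<in> {1..N}}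
   \<union> \<comment> \<open>(CX)\<close>
     {(\<lambda>\<alpha>. \<alpha> (Ci i \<tau>) \<longrightarrow> \<alpha> (X i p v)) | i \<tau> p v.
        i \<in> {1..N} \<and> \<tau> \<in> allowed P d \<phi> t \<and> (p, v) \<in> \<tau>}
   \<union> \<comment> \<open>(RC)\<close>
     {(\<lambda>\<alpha>. \<alpha> (Ct \<tau>) \<longleftrightarrow> (\<exists>i\<in>{1..N}. \<alpha> (Ci i \<tau>))) | \<tau>. \<tau> \<in> allowed P d \<phi> t}
   \<union> \<comment> \<open>(BSU)\<close>
     {(\<lambda>\<alpha>. \<alpha> (U (i + 1)) \<longrightarrow> \<alpha> (U i)) | i. i \<in> {lb + 2..N - 1}}
   \<union> \<comment> \<open>(CU)\<close>
     {(\<lambda>\<alpha>. \<alpha> (Ci i \<tau>) \<longrightarrow> \<alpha> (U i)) | i \<tau>. i \<in> {lb + 2..N} \<and> \<tau> \<in> allowed P d \<phi> t}"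

definition soft_cls :: "'p set \<Rightarrow> ('p \<Rightarrow> 'v set) \<Rightarrow> ('p \<times> 'v) pform \<Rightarrow> nat \<Rightarrow> nat \<Rightarrow> nat
    \<Rightarrow> (((('p, 'v) mvar \<Rightarrow> bool) \<Rightarrow> bool) \<times> nat) set" where
  "soft_cls P d \<phi> t N lb =
     {((\<lambda>\<alpha>. \<not> \<alpha> (U i)), 1) | i. i \<in> {lb + 2..N}}
   \<union> {((\<lambda>\<alpha>. \<alpha> (Ct \<tau>)), (N - (lb + 1)) + 1) | \<tau>. \<tau> \<in> allowed P d \<phi> t}"

end

theory Submission
  imports Defs
begin

(* Reading the variables x_{i,p,v} of a feasible assignment row by row gives N test cases.
   A variable c_tau can only be true for tuples covered by the rows i with some c^i_tau true,
   and for the last such row k the constraints (CU) and (BSU) force u_{lb+2}, ..., u_k true.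
   Conversely, every list of k <= N test cases is encoded by a feasible assignment that pays
   k - (lb+1) for the u_i and m+1 for each allowed tuple it misses.  So the optimum is the
   minimum over k <= N of (k - (lb+1)) + (m+1) (|T_a| - T(k;t,S)).  As k - (lb+1) <= m,
   missing one more tuple never pays off, and the minimum is attained at the least k with
   T(k;t,S) = T(N;t,S).  Since T(k;t,S) increases strictly below CAN(t,S) and equals |T_a|
   from CAN(t,S) on, this k is min(CAN(t,S), N). *)

lemma peval_map_pform: "peval \<alpha> (map_pform f \<phi>) = peval (\<alpha> \<circ> f) \<phi>"
  by (induction \<phi>) auto

lemma peval_cong: "(\<And>a. a \<in> set_pform \<phi> \<Longrightarrow> f a = g a) \<Longrightarrow> peval f \<phi> = peval g \<phi>"
  by (induction \<phi>) auto

lemma hard_cons_iff: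
  "(\<forall>h\<in>hard_cons P d \<phi> t N lb. h \<alpha>) \<longleftrightarrow>
     (\<forall>i\<in>{1..N}. \<forall>p\<in>P. card {v \<in> d p. \<alpha> (X i p v)} = 1)
   \<and> (\<forall>i\<in>{1..N}. peval \<alpha> (map_pform (\<lambda>(p, v). X i p v) \<phi>))
   \<and> (\<forall>i\<in>{1..N}. \<forall>\<tau>\<in>allowed P d \<phi> t. \<forall>(p, v)\<in>\<tau>. \<alpha> (Ci i \<tau>) \<longrightarrow> \<alpha> (X i p v))
   \<and> (\<forall>\<tau>\<in>allowed P d \<phi> t. \<alpha> (Ct \<tau>) \<longleftrightarrow> (\<exists>i\<in>{1..N}. \<alpha> (Ci i \<tau>)))
   \<and> (\<forall>i\<in>{lb + 2..N - 1}. \<alpha> (U (i + 1)) \<longrightarrow> \<alpha> (U i))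
   \<and> (\<forall>i\<in>{lb + 2..N}. \<forall>\<tau>\<in>allowed P d \<phi> t. \<alpha> (Ci i \<tau>) \<longrightarrow> \<alpha> (U i))"
  (is "?sat \<longleftrightarrow> ?X \<and> ?SUTX \<and> ?CX \<and> ?RC \<and> ?BSU \<and> ?CU")
proof
  assume ?sat
  then have sat: "h \<alpha>" if "h \<in> hard_cons P d \<phi> t N lb" for h
    using that by blast
  have "card {v \<in> d p. \<alpha> (X i p v)} = 1" if "i \<in> {1..N}" "p \<in> P" for i p
    using sat[of "\<lambda>\<alpha>. card {v \<in> d p. \<alpha> (X i p v)} = 1"] that
    unfolding hard_cons_def by blast
  moreover have "peval \<alpha> (map_pform (\<lambda>(p, v). X i p v) \<phi>)" if "i \<in> {1..N}" for i
    using sat[of "\<lambda>\<alpha>. peval \<alpha> (map_pform (\<lambda>(p, v). X i p v) \<phi>)"] that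
    unfolding hard_cons_def by blast
  moreover have "\<alpha> (Ci i \<tau>) \<longrightarrow> \<alpha> (X i p v)"
    if "i \<in> {1..N}" "\<tau> \<in> allowed P d \<phi> t" "(p, v) \<in> \<tau>" for i \<tau> p v
    using sat[of "\<lambda>\<alpha>. \<alpha> (Ci i \<tau>) \<longrightarrow> \<alpha> (X i p v)"] that
    unfolding hard_cons_def by blast
  moreover have "\<alpha> (Ct \<tau>) \<longleftrightarrow> (\<exists>i\<in>{1..N}. \<alpha> (Ci i \<tau>))" if "\<tau> \<in> allowed P d \<phi> t" for \<tau>
    using sat[of "\<lambda>\<alpha>. \<alpha> (Ct \<tau>) \<longleftrightarrow> (\<exists>i\<in>{1..N}. \<alpha> (Ci i \<tau>))"] that
    unfolding hard_cons_def by blast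
  moreover have "\<alpha> (U (i + 1)) \<longrightarrow> \<alpha> (U i)" if "i \<in> {lb + 2..N - 1}" for i
    using sat[of "\<lambda>\<alpha>. \<alpha> (U (i + 1)) \<longrightarrow> \<alpha> (U i)"] that
    unfolding hard_cons_def by blast
  moreover have "\<alpha> (Ci i \<tau>) \<longrightarrow> \<alpha> (U i)" if "i \<in> {lb + 2..N}" "\<tau> \<in> allowed P d \<phi> t" for i \<tau>
    using sat[of "\<lambda>\<alpha>. \<alpha> (Ci i \<tau>) \<longrightarrow> \<alpha> (U i)"] that
    unfolding hard_cons_def by blast
  ultimately show "?X \<and> ?SUTX \<and> ?CX \<and> ?RC \<and> ?BSU \<and> ?CU"
    by auto
next
  assume H: "?X \<and> ?SUTX \<and> ?CX \<and> ?RC \<and> ?BSU \<and> ?CU"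
  show ?sat
    unfolding hard_cons_def
    by (intro ballI; elim UnE CollectE exE conjE; simp only:) (use H in fastforce)+
qed

lemma evaluation_eq_iff: "(\<lambda>\<beta> :: 'a \<Rightarrow> bool. \<beta> x) = (\<lambda>\<beta>. \<beta> y) \<longleftrightarrow> x = y"
proof
  assume "(\<lambda>\<beta> :: 'a \<Rightarrow> bool. \<beta> x) = (\<lambda>\<beta>. \<beta> y)"
  from fun_cong[OF this, of "\<lambda>z. z = x"] show "x = y"
    by simp
qed simp

lemma negated_evaluation_eq_iff: "(\<lambda>\<beta>. \<not> \<beta> x) = (\<lambda>\<beta>. \<not> \<beta> y) \<longleftrightarrow> x = y"
proof
  assume "(\<lambda>\<beta>. \<not> \<beta> x) = (\<lambda>\<beta>. \<not> \<beta> y)"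
  from fun_cong[OF this, of "\<lambda>z. z = x"] show "x = y"
    by simp
qed simp

lemma negated_evaluation_neq_evaluation: "(\<lambda>\<beta>. \<not> \<beta> x) \<noteq> (\<lambda>\<beta>. \<beta> y)"
proof
  assume "(\<lambda>\<beta>. \<not> \<beta> x) = (\<lambda>\<beta>. \<beta> y)"
  from fun_cong[OF this, of "\<lambda>_. False"] show False
    by simp
qed

lemma falsified_weight_soft_cls:
  fixes \<alpha> :: "('p, 'v) mvar \<Rightarrow> bool" and P :: "'p set"
  assumes "finite (allowed P d \<phi> t)"
  shows "(\<Sum>(c, w)\<in>soft_cls P d \<phi> t N lb. if c \<alpha> then 0 else w) =
    card {i \<in> {lb + 2..N}. \<alpha> (U i)}
    + (N - (lb + 1) + 1) * card {\<tau> \<in> allowed P d \<phi> t. \<not> \<alpha> (Ct \<tau>)}"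
proof -
  define unit_cl where "unit_cl i = ((\<lambda>\<beta> :: ('p, 'v) mvar \<Rightarrow> bool. \<not> \<beta> (U i)), 1::nat)" for i
  define tuple_cl where
    "tuple_cl \<tau> = ((\<lambda>\<beta> :: ('p, 'v) mvar \<Rightarrow> bool. \<beta> (Ct \<tau>)), N - (lb + 1) + 1)" for \<tau>
  define falsified where "falsified = (\<lambda>(c, w). if c \<alpha> then 0 else w :: nat)"
  have soft: "soft_cls P d \<phi> t N lb = unit_cl ` {lb + 2..N} \<union> tuple_cl ` allowed P d \<phi> t"
    unfolding soft_cls_def unit_cl_def tuple_cl_def by auto
  have disjoint: "unit_cl ` {lb + 2..N} \<inter> tuple_cl ` allowed P d \<phi> t = {}"
    by (auto simp: unit_cl_def tuple_cl_def negated_evaluation_neq_evaluation)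
  have "inj unit_cl" and "inj tuple_cl"
    by (simp_all add: inj_def unit_cl_def tuple_cl_def evaluation_eq_iff negated_evaluation_eq_iff)
  then have "(\<Sum>(c, w)\<in>soft_cls P d \<phi> t N lb. if c \<alpha> then 0 else w)
      = (\<Sum>i\<in>{lb + 2..N}. falsified (unit_cl i)) + (\<Sum>\<tau>\<in>allowed P d \<phi> t. falsified (tuple_cl \<tau>))"
    unfolding soft falsified_def[symmetric] using assms disjoint
    by (simp add: sum.union_disjoint sum.reindex inj_on_subset[OF _ subset_UNIV])
  also have "\<dots> = (\<Sum>i\<in>{lb + 2..N}. if \<alpha> (U i) then 1 else 0)
      + (\<Sum>\<tau>\<in>allowed P d \<phi> t. if \<not> \<alpha> (Ct \<tau>) then N - (lb + 1) + 1 else 0)"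
    by (intro arg_cong2[where f = "(+)"] sum.cong)
      (auto simp: falsified_def unit_cl_def tuple_cl_def)
  also have "\<dots> = card {i \<in> {lb + 2..N}. \<alpha> (U i)}
      + (N - (lb + 1) + 1) * card {\<tau> \<in> allowed P d \<phi> t. \<not> \<alpha> (Ct \<tau>)}"
    using assms by (simp flip: sum.inter_filter)
  finally show ?thesis .
qed

definition decode_row :: "(('p, 'v) mvar \<Rightarrow> bool) \<Rightarrow> ('p \<Rightarrow> 'v set) \<Rightarrow> nat \<Rightarrow> 'p \<Rightarrow> 'v" where
  "decode_row \<alpha> d i p = (THE v. v \<in> d p \<and> \<alpha> (X i p v))"

lemma decode_row:
  assumes "card {v \<in> d p. \<alpha> (X i p v)} = 1"
  shows decode_row_in: "decode_row \<alpha> d i p \<in> d p"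
    and decode_row_iff: "v \<in> d p \<Longrightarrow> \<alpha> (X i p v) \<longleftrightarrow> v = decode_row \<alpha> d i p"
proof -
  obtain w where w: "{v \<in> d p. \<alpha> (X i p v)} = {w}"
    using assms by (rule card_1_singletonE)
  then have "decode_row \<alpha> d i p = w"
    unfolding decode_row_def by (intro the_equality) auto
  with w show "decode_row \<alpha> d i p \<in> d p" and "v \<in> d p \<Longrightarrow> \<alpha> (X i p v) \<longleftrightarrow> v = decode_row \<alpha> d i p"
    by auto
qed

lemma test_case_decode_row:
  assumes "set_pform \<phi> \<subseteq> Sigma P d"
    and one_hot: "\<forall>p\<in>P. card {v \<in> d p. \<alpha> (X i p v)} = 1"
    and "peval \<alpha> (map_pform (\<lambda>(p, v). X i p v) \<phi>)"
  shows "test_case P d \<phi> (decode_row \<alpha> d i)"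
proof -
  have "peval (\<lambda>(p, v). decode_row \<alpha> d i p = v) \<phi> = peval (\<alpha> \<circ> (\<lambda>(p, v). X i p v)) \<phi>"
    using assms(1) by (intro peval_cong) (auto simp: decode_row_iff[OF bspec[OF one_hot]])
  with assms show ?thesis
    unfolding test_case_def peval_map_pform by (simp add: decode_row_in)
qed

lemma card_U_true_ge:
  assumes chain: "\<forall>i\<in>{lb + 2..N - 1}. \<alpha> (U (i + 1)) \<longrightarrow> \<alpha> (U i)"
    and "k \<le> N" and top: "lb + 2 \<le> k \<Longrightarrow> \<alpha> (U k)"
  shows "k - (lb + 1) \<le> card {i \<in> {lb + 2..N}. \<alpha> (U i)}"
proof -
  have "\<alpha> (U j)" if "lb + 2 \<le> j" "j \<le> k" for j
    using \<open>j \<le> k\<close>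
  proof (induction j rule: inc_induct)
    case base
    then show ?case
      using top that by simp
  next
    case (step i)
    then show ?case
      using chain that \<open>k \<le> N\<close> by simp
  qed
  then have "{lb + 2..k} \<subseteq> {i \<in> {lb + 2..N}. \<alpha> (U i)}"
    using \<open>k \<le> N\<close> by auto
  then have "card {lb + 2..k} \<le> card {i \<in> {lb + 2..N}. \<alpha> (U i)}"
    by (intro card_mono) auto
  then show ?thesis
    by simp
qed

definition encode_rows :: "nat \<Rightarrow> (nat \<Rightarrow> 'p \<Rightarrow> 'v) \<Rightarrow> ('p, 'v) mvar \<Rightarrow> bool" where
  "encode_rows n row x = (case x of
       X i p v \<Rightarrow> row i p = v
     | Ci i \<tau> \<Rightarrow> i \<in> {1..n} \<and> covers (row i) \<tau>
     | Ct \<tau> \<Rightarrow> (\<exists>i\<in>{1..n}. covers (row i) \<tau>)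
     | U i \<Rightarrow> i \<le> n)"

lemma hard_cons_encode_rows:
  assumes test_case_row: "\<And>i. test_case P d \<phi> (row i)" and "n \<le> N"
  shows "\<forall>h\<in>hard_cons P d \<phi> t N lb. h (encode_rows n row)"
proof -
  have "card {v \<in> d p. encode_rows n row (X i p v)} = 1" if "p \<in> P" for i p
  proof -
    have "row i p \<in> d p"
      using test_case_row that unfolding test_case_def by blast
    then have "{v \<in> d p. encode_rows n row (X i p v)} = {row i p}"
      unfolding encode_rows_def by auto
    then show ?thesis
      by simp
  qed
  moreover have "peval (encode_rows n row) (map_pform (\<lambda>(p, v). X i p v) \<phi>)" for i
  proof -
    have "encode_rows n row \<circ> (\<lambda>(p, v). X i p v) = (\<lambda>(p, v). row i p = v)"
      unfolding encode_rows_def by (auto simp: fun_eq_iff)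
    then show ?thesis
      using test_case_row unfolding peval_map_pform test_case_def by simp
  qed
  moreover have "encode_rows n row (Ct \<tau>) \<longleftrightarrow> (\<exists>i\<in>{1..N}. encode_rows n row (Ci i \<tau>))" for \<tau>
    using \<open>n \<le> N\<close> unfolding encode_rows_def by auto
  ultimately show ?thesis
    unfolding hard_cons_iff by (auto simp: encode_rows_def covers_def)
qed

locale sut =
  fixes P :: "'p set" and d :: "'p \<Rightarrow> 'v set" and \<phi> :: "('p \<times> 'v) pform" and t :: nat
  assumes model: "sut_model P d \<phi>"
    and satisfiable: "\<exists>A. test_case P d \<phi> A"
begin

abbreviation Ta :: "('p \<times> 'v) set set" where
  "Ta \<equiv> allowed P d \<phi> t"

abbreviation T :: "nat \<Rightarrow> nat" where
  "T \<equiv> Tcov P d \<phi> t"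

abbreviation CAN_S :: nat where
  "CAN_S \<equiv> CAN P d \<phi> t"

definition test_suite :: "('p \<Rightarrow> 'v) list \<Rightarrow> bool" where
  "test_suite L \<longleftrightarrow> (\<forall>A\<in>set L. test_case P d \<phi> A)"

definition covered :: "('p \<Rightarrow> 'v) list \<Rightarrow> ('p \<times> 'v) set set" where
  "covered L = {\<tau>. ttuple P d t \<tau> \<and> (\<exists>A\<in>set L. covers A \<tau>)}"

lemma finite_ttuples: "finite {\<tau>. ttuple P d t \<tau>}"
proof -
  have "finite (Sigma P d)"
    using model unfolding sut_model_def by auto
  then show ?thesis
    unfolding ttuple_def by (rule finite_subset[rotated, OF finite_Pow_iff[THEN iffD2]]) auto
qed

lemma finite_allowed: "finite Ta"
  using finite_ttuples unfolding allowed_def by (rule finite_subset[rotated]) auto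

lemma finite_covered: "finite (covered L)"
  using finite_ttuples unfolding covered_def by (rule finite_subset[rotated]) auto

lemma covered_subset_allowed: "test_suite L \<Longrightarrow> covered L \<subseteq> Ta"
  unfolding covered_def test_suite_def allowed_def by blast

lemma is_CA_iff: "is_CA P d \<phi> t L \<longleftrightarrow> test_suite L \<and> covered L = Ta"
  unfolding is_CA_def test_suite_def covered_def allowed_def by blast

lemma CAN_le_length: "is_CA P d \<phi> t L \<Longrightarrow> CAN_S \<le> length L"
  unfolding CAN_def by (rule Least_le) blast

lemma ex_CA_length_CAN: "\<exists>L. length L = CAN_S \<and> is_CA P d \<phi> t L"
proof -
  obtain \<tau>s where \<tau>s: "set \<tau>s = Ta"
    using finite_allowed finite_list by blast
  define witness where "witness \<tau> = (SOME A. test_case P d \<phi> A \<and> covers A \<tau>)" for \<tau>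
  have "test_case P d \<phi> (witness \<tau>) \<and> covers (witness \<tau>) \<tau>" if "\<tau> \<in> Ta" for \<tau>
    unfolding witness_def
    by (rule someI_ex[of "\<lambda>A. test_case P d \<phi> A \<and> covers A \<tau>"])
      (use that in \<open>auto simp: allowed_def\<close>)
  then have "is_CA P d \<phi> t (map witness \<tau>s)"
    unfolding is_CA_def using \<tau>s by auto
  then have "\<exists>N L. length L = N \<and> is_CA P d \<phi> t L"
    by blast
  then show ?thesis
    unfolding CAN_def by (rule LeastI_ex)
qed

lemma Tcov_eq_Max: "T N = Max {card (covered L) | L. length L = N \<and> test_suite L}"
  by (simp add: Tcov_def covered_def test_suite_def)

lemma finite_suite_coverages: "finite {card (covered L) | L. length L = N \<and> test_suite L}"
proof (rule finite_subset)
  show "{card (covered L) | L. length L = N \<and> test_suite L} \<subseteq> {..card {\<tau>. ttuple P d t \<tau>}}"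
    using finite_ttuples by (auto intro!: card_mono simp: covered_def)
qed simp

lemma card_covered_le_Tcov:
  assumes "length L \<le> N" and "test_suite L"
  shows "card (covered L) \<le> T N"
proof -
  obtain A where "test_case P d \<phi> A"
    using satisfiable ..
  define L' where "L' = L @ replicate (N - length L) A"
  have L': "length L' = N" "test_suite L'"
    using assms \<open>test_case P d \<phi> A\<close> by (auto simp: L'_def test_suite_def)
  have "covered L \<subseteq> covered L'"
    unfolding covered_def L'_def by auto
  then have "card (covered L) \<le> card (covered L')"
    using finite_covered by (rule card_mono[rotated])
  also have "\<dots> \<le> T N"
    unfolding Tcov_eq_Max using L' finite_suite_coverages by (intro Max_ge) auto
  finally show ?thesis .
qed

lemma Tcov_attained:
  obtains L where "length L = N" and "test_suite L" and "card (covered L) = T N"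
proof -
  obtain A where "test_case P d \<phi> A"
    using satisfiable ..
  then have "test_suite (replicate N A)"
    by (simp add: test_suite_def)
  then have "{card (covered L) | L. length L = N \<and> test_suite L} \<noteq> {}"
    by (intro ex_in_conv[THEN iffD1] exI[of _ "card (covered (replicate N A))"]) auto
  then have "T N \<in> {card (covered L) | L. length L = N \<and> test_suite L}"
    unfolding Tcov_eq_Max using finite_suite_coverages by (rule Max_in[rotated])
  then obtain L where "length L = N" "test_suite L" "card (covered L) = T N"
    by auto
  then show ?thesis
    by (rule that)
qed

lemma Tcov_mono: "k \<le> N \<Longrightarrow> T k \<le> T N"
  by (rule Tcov_attained[of k]) (metis card_covered_le_Tcov)

lemma Tcov_le_card_allowed: "T N \<le> card Ta"
  by (rule Tcov_attained[of N]) (metis card_mono covered_subset_allowed finite_allowed)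

lemma Tcov_eq_card_allowed_iff: "T N = card Ta \<longleftrightarrow> CAN_S \<le> N"
proof
  assume full: "T N = card Ta"
  obtain L where L: "length L = N" "test_suite L" "card (covered L) = T N"
    using Tcov_attained .
  have "covered L = Ta"
    using covered_subset_allowed[OF L(2)] finite_allowed L(3) full by (metis card_subset_eq)
  with L show "CAN_S \<le> N"
    using CAN_le_length is_CA_iff by blast
next
  assume "CAN_S \<le> N"
  moreover obtain L where "length L = CAN_S" "is_CA P d \<phi> t L"
    using ex_CA_length_CAN by blast
  ultimately have "card Ta \<le> T N"
    by (metis card_covered_le_Tcov is_CA_iff)
  then show "T N = card Ta"
    using Tcov_le_card_allowed le_antisym by blast
qed

lemma Tcov_less_Tcov_Suc:
  assumes "N < CAN_S"
  shows "T N < T (Suc N)"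
proof -
  obtain L where L: "length L = N" "test_suite L" "card (covered L) = T N"
    using Tcov_attained .
  have "\<not> is_CA P d \<phi> t L"
    using CAN_le_length assms L(1) by fastforce
  then obtain \<tau> where \<tau>: "\<tau> \<in> Ta" "\<tau> \<notin> covered L"
    using covered_subset_allowed[OF L(2)] L(2) is_CA_iff by blast
  then obtain A where A: "test_case P d \<phi> A" "covers A \<tau>" "ttuple P d t \<tau>"
    unfolding allowed_def by blast
  have "insert \<tau> (covered L) \<subseteq> covered (L @ [A])"
    using A unfolding covered_def by auto
  then have "Suc (card (covered L)) \<le> card (covered (L @ [A]))"
    using \<tau>(2) finite_covered by (metis card_insert_disjoint card_mono)
  also have "\<dots> \<le> T (Suc N)"
    using L A(1) by (intro card_covered_le_Tcov) (auto simp: test_suite_def)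
  finally show ?thesis
    using L(3) by simp
qed

lemma Tcov_min_CAN: "T (min CAN_S N) = T N"
  using Tcov_eq_card_allowed_iff[of CAN_S] Tcov_eq_card_allowed_iff[of N]
  by (auto simp: min_def)

text \<open>The cost of encoding a best list of \<open>k\<close> test cases: the \<open>u\<^sub>i\<close> with \<open>lb + 2 \<le> i \<le> k\<close>
  are true, and each allowed tuple the list misses costs \<open>m + 1\<close>.\<close>

definition suite_cost :: "nat \<Rightarrow> nat \<Rightarrow> nat \<Rightarrow> nat" where
  "suite_cost N lb k = k - (lb + 1) + (N - (lb + 1) + 1) * (card Ta - T k)"

lemma min_CAN_le_of_Tcov_eq:
  assumes "k \<le> N" and "T k = T N"
  shows "min CAN_S N \<le> k"
proof (cases "CAN_S \<le> N")
  case True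
  then have "T k = card Ta"
    using assms(2) Tcov_eq_card_allowed_iff by simp
  then show ?thesis
    using Tcov_eq_card_allowed_iff by simp
next
  case False
  have "\<not> k < N"
  proof
    assume "k < N"
    then have "T k < T (Suc k)"
      using False by (intro Tcov_less_Tcov_Suc) simp
    also have "\<dots> \<le> T N"
      using \<open>k < N\<close> by (intro Tcov_mono) simp
    finally show False
      using assms(2) by simp
  qed
  then show ?thesis
    by simp
qed

lemma suite_cost_min_CAN_le:
  assumes "k \<le> N"
  shows "suite_cost N lb (min CAN_S N) \<le> suite_cost N lb k"
proof -
  define k0 where "k0 = min CAN_S N"
  define m where "m = N - (lb + 1)"
  have T_k0: "T k0 = T N"
    unfolding k0_def by (rule Tcov_min_CAN)
  consider "T k < T N" | "T k = T N"
    using Tcov_mono[OF assms] by linarith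
  then have "suite_cost N lb k0 \<le> suite_cost N lb k"
  proof cases
    case 1
    \<comment> \<open>missing one more tuple costs \<open>m + 1\<close>, more than all the \<open>u\<^sub>i\<close> together\<close>
    then have "card Ta - T N + 1 \<le> card Ta - T k"
      using Tcov_le_card_allowed[of N] by linarith
    then have "(m + 1) * (card Ta - T N) + (m + 1) \<le> (m + 1) * (card Ta - T k)"
      by (metis add.commute mult_le_mono2 mult_Suc_right plus_1_eq_Suc)
    moreover have "k0 - (lb + 1) \<le> m"
      unfolding k0_def m_def by simp
    ultimately show ?thesis
      unfolding suite_cost_def m_def T_k0 by linarith
  next
    case 2
    then have "k0 \<le> k"
      unfolding k0_def by (rule min_CAN_le_of_Tcov_eq[OF assms])
    then show ?thesis
      using 2 T_k0 unfolding suite_cost_def by simp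
  qed
  then show ?thesis
    unfolding k0_def .
qed

lemma feasible_assignment_of_suite:
  assumes suite: "test_suite L" and "length L \<le> N"
  obtains \<alpha> where "\<forall>h\<in>hard_cons P d \<phi> t N lb. h \<alpha>"
    and "{i \<in> {lb + 2..N}. \<alpha> (U i)} = {lb + 2..length L}"
    and "{\<tau> \<in> Ta. \<not> \<alpha> (Ct \<tau>)} = Ta - covered L"
proof -
  obtain A0 where A0: "test_case P d \<phi> A0"
    using satisfiable ..
  define n where "n = length L"
  \<comment> \<open>the rows after the suite still need test cases, as (X) and (SUTX) constrain all \<open>N\<close> rows\<close>
  define row where "row i = (if i \<in> {1..n} then L ! (i - 1) else A0)" for i
  have "row ` {1..n} = (!) L ` {..<n}"
    unfolding image_Suc_lessThan[symmetric] image_image by (simp add: row_def)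
  also have "\<dots> = set L"
    unfolding n_def by (auto simp: set_conv_nth)
  finally have rows: "row ` {1..n} = set L" .
  have covers_iff: "encode_rows n row (Ct \<tau>) \<longleftrightarrow> (\<exists>A\<in>set L. covers A \<tau>)" for \<tau>
    unfolding rows[symmetric] encode_rows_def by simp
  show ?thesis
  proof (rule that)
    have "test_case P d \<phi> (row i)" for i
      using suite A0 unfolding row_def n_def test_suite_def by auto
    then show "\<forall>h\<in>hard_cons P d \<phi> t N lb. h (encode_rows n row)"
      using \<open>length L \<le> N\<close> unfolding n_def by (rule hard_cons_encode_rows)
    show "{i \<in> {lb + 2..N}. encode_rows n row (U i)} = {lb + 2..length L}"
      using \<open>length L \<le> N\<close> unfolding encode_rows_def n_def by auto
    show "{\<tau> \<in> Ta. \<not> encode_rows n row (Ct \<tau>)} = Ta - covered L"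
      using covers_iff unfolding covered_def allowed_def by auto
  qed
qed

lemma decode_row_of_feasible:
  assumes "\<forall>h\<in>hard_cons P d \<phi> t N lb. h \<alpha>" and "i \<in> {1..N}"
  shows test_case_decode_row_of_feasible: "test_case P d \<phi> (decode_row \<alpha> d i)"
    and covers_decode_row_of_feasible:
      "\<tau> \<in> Ta \<Longrightarrow> \<alpha> (Ci i \<tau>) \<Longrightarrow> covers (decode_row \<alpha> d i) \<tau>"
proof -
  have one_hot: "\<forall>p\<in>P. card {v \<in> d p. \<alpha> (X i p v)} = 1"
    and sutx: "peval \<alpha> (map_pform (\<lambda>(p, v). X i p v) \<phi>)"
    and cx: "\<forall>\<tau>\<in>Ta. \<forall>(p, v)\<in>\<tau>. \<alpha> (Ci i \<tau>) \<longrightarrow> \<alpha> (X i p v)"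
    using assms unfolding hard_cons_iff by blast+
  show "test_case P d \<phi> (decode_row \<alpha> d i)"
    using model one_hot sutx unfolding sut_model_def by (intro test_case_decode_row) auto
  show "covers (decode_row \<alpha> d i) \<tau>" if "\<tau> \<in> Ta" "\<alpha> (Ci i \<tau>)" for \<tau>
    unfolding covers_def
  proof clarify
    fix p v assume pv: "(p, v) \<in> \<tau>"
    have "\<tau> \<subseteq> Sigma P d"
      using that(1) unfolding allowed_def ttuple_def by blast
    with pv have "p \<in> P" and "v \<in> d p"
      by auto
    from cx that have "\<forall>(p, v)\<in>\<tau>. \<alpha> (X i p v)"
      by blast
    with pv have "\<alpha> (X i p v)"
      by auto
    moreover have "card {v \<in> d p. \<alpha> (X i p v)} = 1"
      using one_hot \<open>p \<in> P\<close> by blast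
    ultimately show "decode_row \<alpha> d i p = v"
      using decode_row_iff[of d p \<alpha> i v] \<open>v \<in> d p\<close> by simp
  qed
qed

lemma suite_of_feasible_assignment:
  assumes feasible: "\<forall>h\<in>hard_cons P d \<phi> t N lb. h \<alpha>"
  obtains L where "test_suite L" and "length L \<le> N"
    and "{\<tau> \<in> Ta. \<alpha> (Ct \<tau>)} \<subseteq> covered L"
    and "length L - (lb + 1) \<le> card {i \<in> {lb + 2..N}. \<alpha> (U i)}"
proof -
  have rc: "\<forall>\<tau>\<in>Ta. \<alpha> (Ct \<tau>) \<longleftrightarrow> (\<exists>i\<in>{1..N}. \<alpha> (Ci i \<tau>))"
    and bsu: "\<forall>i\<in>{lb + 2..N - 1}. \<alpha> (U (i + 1)) \<longrightarrow> \<alpha> (U i)"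
    and cu: "\<forall>i\<in>{lb + 2..N}. \<forall>\<tau>\<in>Ta. \<alpha> (Ci i \<tau>) \<longrightarrow> \<alpha> (U i)"
    using feasible unfolding hard_cons_iff by blast+
  \<comment> \<open>rows after the last one used by some \<open>c\<^sup>i\<^sub>\<tau>\<close> are dropped\<close>
  define used where "used = {i \<in> {1..N}. \<exists>\<tau>\<in>Ta. \<alpha> (Ci i \<tau>)}"
  define k where "k = Max (insert 0 used)"
  have "finite (insert 0 used)"
    unfolding used_def by simp
  then have used_le_k: "i \<le> k" if "i \<in> used" for i
    unfolding k_def using that by simp
  have "k \<in> insert 0 used"
    unfolding k_def using \<open>finite (insert 0 used)\<close> by (rule Max_in) simp
  then have "k \<le> N"
    unfolding used_def by auto
  define L where "L = map (decode_row \<alpha> d) [1..<k + 1]"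
  have set_L: "set L = decode_row \<alpha> d ` {1..k}"
    unfolding L_def by auto
  show ?thesis
  proof
    show "test_suite L"
      unfolding test_suite_def set_L
      using test_case_decode_row_of_feasible[OF feasible] \<open>k \<le> N\<close> by auto
    show "length L \<le> N"
      unfolding L_def using \<open>k \<le> N\<close> by simp
    show "{\<tau> \<in> Ta. \<alpha> (Ct \<tau>)} \<subseteq> covered L"
    proof clarify
      fix \<tau> assume \<tau>: "\<tau> \<in> Ta" "\<alpha> (Ct \<tau>)"
      then obtain i where i: "i \<in> {1..N}" "\<alpha> (Ci i \<tau>)"
        using rc by blast
      then have "i \<le> k"
        using \<tau> used_le_k unfolding used_def by blast
      moreover have "covers (decode_row \<alpha> d i) \<tau>"
        using covers_decode_row_of_feasible[OF feasible i(1) \<tau>(1) i(2)] .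
      ultimately show "\<tau> \<in> covered L"
        using i(1) \<tau>(1) unfolding covered_def allowed_def set_L by auto
    qed
    have "\<alpha> (U k)" if "lb + 2 \<le> k"
      using \<open>k \<in> insert 0 used\<close> cu that unfolding used_def by auto
    then show "length L - (lb + 1) \<le> card {i \<in> {lb + 2..N}. \<alpha> (U i)}"
      unfolding L_def using bsu \<open>k \<le> N\<close> by (intro card_U_true_ge) auto
  qed
qed

lemma wpms_opt_eq_suite_cost:
  "wpms_opt (hard_cons P d \<phi> t N lb) (soft_cls P d \<phi> t N lb) =
     enat (suite_cost N lb (min CAN_S N))"
proof -
  define k0 where "k0 = min CAN_S N"
  define cost where "cost \<alpha> = card {i \<in> {lb + 2..N}. \<alpha> (U i)}
      + (N - (lb + 1) + 1) * card {\<tau> \<in> Ta. \<not> \<alpha> (Ct \<tau>)}" for \<alpha>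
  define feasible where "feasible = {\<alpha>. \<forall>h\<in>hard_cons P d \<phi> t N lb. h \<alpha>}"
  have opt: "wpms_opt (hard_cons P d \<phi> t N lb) (soft_cls P d \<phi> t N lb)
      = (INF \<alpha>\<in>feasible. enat (cost \<alpha>))"
    unfolding wpms_opt_def falsified_weight_soft_cls[OF finite_allowed] cost_def feasible_def ..
  obtain L where L: "length L = k0" "test_suite L" "card (covered L) = T k0"
    using Tcov_attained .
  have "length L \<le> N"
    unfolding L(1) k0_def by simp
  then obtain \<alpha>0 where "\<forall>h\<in>hard_cons P d \<phi> t N lb. h \<alpha>0"
    and "{i \<in> {lb + 2..N}. \<alpha>0 (U i)} = {lb + 2..length L}"
    and "{\<tau> \<in> Ta. \<not> \<alpha>0 (Ct \<tau>)} = Ta - covered L"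
    by (rule feasible_assignment_of_suite[OF L(2)])
  then have "\<alpha>0 \<in> feasible" and "cost \<alpha>0 = suite_cost N lb k0"
    using L covered_subset_allowed[OF L(2)] finite_covered
    by (simp_all add: feasible_def cost_def suite_cost_def card_Diff_subset mult.commute)
  have lower: "suite_cost N lb k0 \<le> cost \<alpha>" if "\<alpha> \<in> feasible" for \<alpha>
  proof -
    from that have "\<forall>h\<in>hard_cons P d \<phi> t N lb. h \<alpha>"
      unfolding feasible_def by simp
    then obtain L where L: "test_suite L" "length L \<le> N"
      "{\<tau> \<in> Ta. \<alpha> (Ct \<tau>)} \<subseteq> covered L"
      "length L - (lb + 1) \<le> card {i \<in> {lb + 2..N}. \<alpha> (U i)}"
      by (rule suite_of_feasible_assignment)
    have "card Ta - T (length L) \<le> card Ta - card (covered L)"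
      using card_covered_le_Tcov[OF order_refl L(1)] by simp
    also have "\<dots> \<le> card (Ta - covered L)"
      by (rule diff_card_le_card_Diff) (rule finite_covered)
    also have "\<dots> \<le> card {\<tau> \<in> Ta. \<not> \<alpha> (Ct \<tau>)}"
      using L(3) finite_allowed by (intro card_mono) auto
    finally have "suite_cost N lb (length L) \<le> cost \<alpha>"
      using L(4) unfolding suite_cost_def cost_def by (intro add_le_mono mult_le_mono2)
    then show ?thesis
      using suite_cost_min_CAN_le[OF L(2), where lb = lb] unfolding k0_def by linarith
  qed
  have "(INF \<alpha>\<in>feasible. enat (cost \<alpha>)) = enat (suite_cost N lb k0)"
  proof (rule INF_eqI)
    show "enat (suite_cost N lb k0) \<le> enat (cost \<alpha>)" if "\<alpha> \<in> feasible" for \<alpha>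
      using lower[OF that] by simp
    show "y \<le> enat (suite_cost N lb k0)" if "\<And>\<alpha>. \<alpha> \<in> feasible \<Longrightarrow> y \<le> enat (cost \<alpha>)" for y
      using that[OF \<open>\<alpha>0 \<in> feasible\<close>] \<open>cost \<alpha>0 = suite_cost N lb k0\<close> by simp
  qed
  then show ?thesis
    unfolding opt k0_def .
qed

end

theorem proposition11:
  fixes P :: "'p set" and d :: "'p \<Rightarrow> 'v set" and \<phi> :: "('p \<times> 'v) pform"
    and t N lb :: nat
  assumes "sut_model P d \<phi>"
    and "\<exists>A. test_case P d \<phi> A"
    and "1 \<le> t" and "t \<le> card P"
    and "1 \<le> N"
    and "lb < CAN P d \<phi> t" and "lb + 1 \<le> N"
  shows "wpms_opt (hard_cons P d \<phi> t N lb) (soft_cls P d \<phi> t N lb) =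
    (let m = N - (lb + 1) in
     if N \<ge> CAN P d \<phi> t
     then enat (CAN P d \<phi> t - (lb + 1) + (card (allowed P d \<phi> t) - Tcov P d \<phi> t N) * (m + 1))
     else enat (N - (lb + 1) + (card (allowed P d \<phi> t) - Tcov P d \<phi> t N) * (m + 1)))"
proof -
  interpret sut P d \<phi> t
    using assms(1,2) by unfold_locales
  show ?thesis
    unfolding wpms_opt_eq_suite_cost suite_cost_def Tcov_min_CAN Let_def
    by (simp add: min_def mult.commute)
qed

end
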